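(* Let $m,n$ be positive integers with $n\ge 2$, let $\Pi$ be a regular $(nm+2)$-gon, and let $\Gamma^m_{A_{n-1}}$ and $\tau_m$ be the quiver of $m$-diagonals of $\Pi$ and the rotation map described in the context. Then $(\Gamma^m_{A_{n-1}},\tau_m)$ is a stable translation quiver.
   Context: The vertices of $\Pi$ are labelled $1,\dots,nm+2$ clockwise, and vertex labels are taken modulo $nm+2$. A diagonal with endpoints $i,j$ is written $(i,j)=(j,i)$. An $m$-diagonal is a diagonal of $\Pi$ that divides $\Pi$ into an $(mj+2)$-gon and an $(m(n-j)+2)$-gon for some integer $1\le j\le n-1$. The quiver $\Gamma^m_{A_{n-1}}$ has as vertices the $m$-diagonals of $\Pi$. There is an arrow $D\to D'$ (and at most one) exactly when $D$ and $D'$ share an endpoint $i$, with other endpoints $j$ and $j'$ respectively, such that $D$, $D'$ and the boundary arc from $j$ to $j'$ not containing $i$ bound an $(m+2)$-gon, and $D$ is rotated onto the line through $D'$ by a clockwise rotation about $i$. Equivalently, $D=(i,j)$ and $D'=(i,j+m)$ are both $m$-diagonals. The map $\tau_m$ sends an $m$-diagonal to its image under the anticlockwise rotation of $\Pi$ about its centre through $2m\pi/(nm+2)$, that is $(i,j)\mapsto(i-m,j-m)$. A translation quiver is a pair $(\Gamma,\tau)$ with the following properties: $\Gamma$ is a locally finite quiver with vertex set $\Gamma_0$; $\tau:\Gamma_0'\to\Gamma_0$ is an injective map defined on a subset $\Gamma_0'\subseteq\Gamma_0$; and for all $X\in\Gamma_0$ and $Y\in\Gamma_0'$ the number of arrows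 $X\to Y$ equals the number of arrows $\tau(Y)\to X$. The vertices not in $\Gamma_0'$ are called projective. The translation quiver is stable if $\Gamma_0'=\Gamma_0$ and $\tau$ is bijective. *)

theory Defs
  imports Main
begin

text \<open>A quiver is given by a vertex set V and an arrow-multiplicity function
  arr (arr x y = number of arrows x -> y); arrows only join vertices of V.
  tau is defined on the subset V' of V.\<close>

definition locally_finite_quiver :: "'v set \<Rightarrow> ('v \<Rightarrow> 'v \<Rightarrow> nat) \<Rightarrow> bool" where
  "locally_finite_quiver V arr \<longleftrightarrow>
     (\<forall>x y. arr x y > 0 \<longrightarrow> x \<in> V \<and> y \<in> V) \<and>
     (\<forall>x\<in>V. finite {y. arr x y > 0} \<and> finite {y. arr y x > 0})"

definition translation_quiver ::
  "'v set \<Rightarrow> ('v \<Rightarrow> 'v \<Rightarrow> nat) \<Rightarrow> 'v set \<Rightarrow> ('v \<Rightarrow> 'v) \<Rightarrow> bool" where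
  "translation_quiver V arr V' tau \<longleftrightarrow>
     locally_finite_quiver V arr \<and> V' \<subseteq> V \<and> tau ` V' \<subseteq> V \<and> inj_on tau V' \<and>
     (\<forall>X\<in>V. \<forall>Y\<in>V'. arr X Y = arr (tau Y) X)"

definition stable_translation_quiver ::
  "'v set \<Rightarrow> ('v \<Rightarrow> 'v \<Rightarrow> nat) \<Rightarrow> ('v \<Rightarrow> 'v) \<Rightarrow> bool" where
  "stable_translation_quiver V arr tau \<longleftrightarrow>
     translation_quiver V arr V tau \<and> bij_betw tau V V"

text \<open>Vertices of the polygon are labelled 1..N with N = nm+2; labels are taken
  modulo N via red.\<close>

definition red :: "nat \<Rightarrow> nat \<Rightarrow> int \<Rightarrow> int" where
  "red n m k = (k - 1) mod int (n * m + 2) + 1"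

text \<open>A diagonal (i,j) = (j,i) is the set {i,j}. An m-diagonal with i < j cuts the
  polygon into the polygon on vertices i..j (j-i+1 vertices) and the one on the remaining
  vertices together with i,j (N-(j-i)+1 vertices); it is required that these are an
  (mk+2)-gon and an (m(n-k)+2)-gon for some 1 <= k <= n-1.\<close>

definition is_m_diagonal :: "nat \<Rightarrow> nat \<Rightarrow> int set \<Rightarrow> bool" where
  "is_m_diagonal n m D \<longleftrightarrow>
     (\<exists>i j k. D = {i, j} \<and> 1 \<le> i \<and> i < j \<and> j \<le> int (n * m + 2) \<and>
        1 \<le> k \<and> k \<le> int n - 1 \<and>
        j - i + 1 = int m * k + 2 \<and>
        int (n * m + 2) - (j - i) + 1 = int m * (int n - k) + 2)"

definition m_diagonals :: "nat \<Rightarrow> nat \<Rightarrow> int set set" where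
  "m_diagonals n m = {D. is_m_diagonal n m D}"

definition gamma_arr :: "nat \<Rightarrow> nat \<Rightarrow> int set \<Rightarrow> int set \<Rightarrow> nat" where
  "gamma_arr n m D D' =
     (if is_m_diagonal n m D \<and> is_m_diagonal n m D' \<and>
         (\<exists>i j. D = {i, j} \<and> D' = {i, red n m (j + int m)})
      then 1 else 0)"

definition tau_m :: "nat \<Rightarrow> nat \<Rightarrow> int set \<Rightarrow> int set" where
  "tau_m n m D = (\<lambda>x. red n m (x - int m)) ` D"

end

theory Submission
  imports Defs
begin

text \<open>Read labels modulo N = nm+2. A pair {i,j} of labels is an m-diagonal exactly when
  the clockwise distance (j - i) mod N is mk+1 for some 1 \<le> k \<le> n-1; this description is
  invariant under every rotation, so \<tau> permutes the m-diagonals, with inverse the rotation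
  by +m. The arrow condition is symmetric under \<tau>: if X = {i,j} and Y = {i,j+m}, then
  \<tau> Y = {j,i-m} and X = {j,(i-m)+m}, so \<tau> Y \<rightarrow> X; the converse rotates back by m.
  Local finiteness is automatic because there are only finitely many diagonals.
  None of this uses 1 \<le> m or 2 \<le> n.\<close>

lemma locally_finite_quiver_if_finite:
  assumes "finite V" and "\<And>x y. arr x y > 0 \<Longrightarrow> x \<in> V \<and> y \<in> V"
  shows "locally_finite_quiver V arr"
proof -
  have "{y. arr x y > 0} \<subseteq> V" "{y. arr y x > 0} \<subseteq> V" for x
    using assms(2) by blast+
  then show ?thesis
    unfolding locally_finite_quiver_def using assms finite_subset by metis
qed

lemma stable_translation_quiverI:
  assumes "locally_finite_quiver V arr" and "bij_betw tau V V"
    and "\<And>X Y. X \<in> V \<Longrightarrow> Y \<in> V \<Longrightarrow> arr X Y = arr (tau Y) X"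
  shows "stable_translation_quiver V arr tau"
  using assms bij_betw_imp_inj_on bij_betw_imp_surj_on
  unfolding stable_translation_quiver_def translation_quiver_def by fastforce

lemma red_bounds: "1 \<le> red n m x" "red n m x \<le> int (n*m+2)"
proof -
  have "int (n*m+2) > 0" by (simp only: of_nat_0_less_iff)
  from pos_mod_sign[OF this, of "x - 1"] pos_mod_bound[OF this, of "x - 1"]
  show "1 \<le> red n m x" "red n m x \<le> int (n*m+2)"
    unfolding red_def by linarith+
qed

lemma red_eq_self: "1 \<le> x \<Longrightarrow> x \<le> int (n*m+2) \<Longrightarrow> red n m x = x"
  unfolding red_def by (subst mod_pos_pos_trivial) auto

lemma red_add_red: "red n m (red n m x + t) = red n m (x + t)"
  unfolding red_def by (simp add: mod_simps algebra_simps)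

lemma red_diff_red: "red n m (red n m x - t) = red n m (x - t)"
  using red_add_red[of n m x "- t"] by simp

lemma red_diff_mod: "(red n m y - red n m x) mod int (n*m+2) = (y - x) mod int (n*m+2)"
proof -
  have "((y - 1) mod int (n*m+2) - (x - 1) mod int (n*m+2)) mod int (n*m+2)
      = (y - 1 - (x - 1)) mod int (n*m+2)"
    by (rule mod_diff_eq)
  then show ?thesis
    unfolding red_def by simp
qed

lemma m_diagonal_bounds:
  assumes "is_m_diagonal n m D" and "x \<in> D"
  shows "x \<in> {1..int (n*m+2)}"
  using assms unfolding is_m_diagonal_def by fastforce

lemma finite_m_diagonals: "finite (m_diagonals n m)"
proof (rule finite_subset)
  show "m_diagonals n m \<subseteq> Pow {1..int (n*m+2)}"
    unfolding m_diagonals_def using m_diagonal_bounds by blast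
qed simp

lemma is_m_diagonal_iff_cyclic_distance:
  "is_m_diagonal n m D \<longleftrightarrow>
     (\<exists>i j k. D = {i, j} \<and> i \<in> {1..int (n*m+2)} \<and> j \<in> {1..int (n*m+2)} \<and>
        1 \<le> k \<and> k \<le> int n - 1 \<and> (j - i) mod int (n*m+2) = int m * k + 1)"
    (is "?diag \<longleftrightarrow> ?cyclic")
proof
  assume ?diag
  then obtain i j k where ijk: "D = {i, j}" "1 \<le> i" "i < j" "j \<le> int (n*m+2)"
      "1 \<le> k" "k \<le> int n - 1" "j - i + 1 = int m * k + 2"
    unfolding is_m_diagonal_def by blast
  have "int m * k \<le> int m * (int n - 1)"
    using ijk by (simp add: mult_left_mono)
  then have "(j - i) mod int (n*m+2) = j - i"
    using ijk by (intro mod_pos_pos_trivial) (auto simp: algebra_simps)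
  with ijk have "D = {i, j} \<and> i \<in> {1..int (n*m+2)} \<and> j \<in> {1..int (n*m+2)} \<and>
      1 \<le> k \<and> k \<le> int n - 1 \<and> (j - i) mod int (n*m+2) = int m * k + 1"
    by auto
  then show ?cyclic
    by blast
next
  assume ?cyclic
  then obtain i j k where ijk: "D = {i, j}" "i \<in> {1..int (n*m+2)}" "j \<in> {1..int (n*m+2)}"
      "1 \<le> k" "k \<le> int n - 1" and dist: "(j - i) mod int (n*m+2) = int m * k + 1"
    by blast
  have N: "int (n*m+2) = int m * (int n - k) + int m * k + 2"
    by (simp add: algebra_simps)
  have mk: "int m * k \<ge> 0"
    using ijk by simp
  consider "i < j" | "j < i" | "i = j" by linarith
  then show ?diag
  proof cases
    case 1
    then have "j - i = int m * k + 1"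
      using ijk dist by (simp add: mod_pos_pos_trivial)
    then show ?diag
      unfolding is_m_diagonal_def using ijk 1 N by (intro exI[of _ i] exI[of _ j] exI[of _ k]) auto
  next
    case 2
    have "(j - i) mod int (n*m+2) = (j - i + int (n*m+2)) mod int (n*m+2)"
      by simp
    also have "\<dots> = j - i + int (n*m+2)"
      using ijk 2 by (intro mod_pos_pos_trivial) auto
    finally have "i - j = int m * (int n - k) + 1"
      using dist N by linarith
    then show ?diag
      unfolding is_m_diagonal_def using ijk 2 N mk
      by (intro exI[of _ j] exI[of _ i] exI[of _ "int n - k"]) (auto simp: insert_commute)
  next
    case 3
    then show ?diag using dist mk by simp
  qed
qed

definition rotation :: "nat \<Rightarrow> nat \<Rightarrow> int \<Rightarrow> int set \<Rightarrow> int set" where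
  "rotation n m t D = (\<lambda>x. red n m (x + t)) ` D"

lemma tau_m_eq_rotation: "tau_m n m = rotation n m (- int m)"
  unfolding tau_m_def rotation_def by (simp add: fun_eq_iff)

lemma rotation_pair [simp]: "rotation n m t {i, j} = {red n m (i + t), red n m (j + t)}"
  by (simp add: rotation_def)

lemma rotation_rotation: "rotation n m s (rotation n m t D) = rotation n m (t + s) D"
  unfolding rotation_def image_image by (simp add: red_add_red add.assoc)

lemma rotation_0:
  assumes "D \<subseteq> {1..int (n*m+2)}"
  shows "rotation n m 0 D = D"
proof -
  have "rotation n m 0 D = id ` D"
    unfolding rotation_def using assms by (intro image_cong) (auto simp: red_eq_self)
  then show ?thesis
    by simp
qed

lemma is_m_diagonal_rotation:
  assumes "is_m_diagonal n m D"
  shows "is_m_diagonal n m (rotation n m t D)"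
proof -
  obtain i j k where ijk: "D = {i, j}" "1 \<le> k" "k \<le> int n - 1"
      "(j - i) mod int (n*m+2) = int m * k + 1"
    using assms unfolding is_m_diagonal_iff_cyclic_distance by blast
  then have "(red n m (j + t) - red n m (i + t)) mod int (n*m+2) = int m * k + 1"
    using red_diff_mod[of n m "j + t" "i + t"] by simp
  with ijk have "rotation n m t D = {red n m (i + t), red n m (j + t)} \<and>
      red n m (i + t) \<in> {1..int (n*m+2)} \<and> red n m (j + t) \<in> {1..int (n*m+2)} \<and>
      1 \<le> k \<and> k \<le> int n - 1 \<and>
      (red n m (j + t) - red n m (i + t)) mod int (n*m+2) = int m * k + 1"
    using red_bounds[of n m "i + t"] red_bounds[of n m "j + t"] by simp
  then show ?thesis
    unfolding is_m_diagonal_iff_cyclic_distance by blast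
qed

lemma bij_betw_tau_m: "bij_betw (tau_m n m) (m_diagonals n m) (m_diagonals n m)"
proof (rule bij_betw_byWitness[where f' = "rotation n m (int m)"])
  have "rotation n m s (rotation n m (- s) D) = D" "rotation n m (- s) (rotation n m s D) = D"
    if "D \<in> m_diagonals n m" for D s
    using that m_diagonal_bounds by (auto simp: m_diagonals_def rotation_rotation intro!: rotation_0)
  then show "\<forall>D\<in>m_diagonals n m. rotation n m (int m) (tau_m n m D) = D"
    "\<forall>D\<in>m_diagonals n m. tau_m n m (rotation n m (int m) D) = D"
    by (simp_all add: tau_m_eq_rotation)
qed (auto simp: tau_m_eq_rotation m_diagonals_def is_m_diagonal_rotation)

definition pivot_step :: "nat \<Rightarrow> nat \<Rightarrow> int set \<Rightarrow> int set \<Rightarrow> bool" where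
  "pivot_step n m D D' \<longleftrightarrow> (\<exists>i j. D = {i, j} \<and> D' = {i, red n m (j + int m)})"

lemma gamma_arr_eq:
  "gamma_arr n m D D' =
     (if is_m_diagonal n m D \<and> is_m_diagonal n m D' \<and> pivot_step n m D D' then 1 else 0)"
  unfolding gamma_arr_def pivot_step_def ..

lemma pivot_step_tau_m_iff:
  assumes "X \<subseteq> {1..int (n*m+2)}" and "Y \<subseteq> {1..int (n*m+2)}"
  shows "pivot_step n m X Y \<longleftrightarrow> pivot_step n m (tau_m n m Y) X"
proof
  assume "pivot_step n m X Y"
  then obtain i j where X: "X = {i, j}" and Y: "Y = {i, red n m (j + int m)}"
    unfolding pivot_step_def by blast
  have "tau_m n m Y = {j, red n m (i - int m)}" and "X = {j, red n m (red n m (i - int m) + int m)}"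
    using assms(1) X Y by (auto simp: tau_m_eq_rotation red_add_red red_diff_red red_eq_self)
  then show "pivot_step n m (tau_m n m Y) X"
    unfolding pivot_step_def by blast
next
  assume "pivot_step n m (tau_m n m Y) X"
  then obtain a b where tau_Y: "tau_m n m Y = {a, b}" and X: "X = {a, red n m (b + int m)}"
    unfolding pivot_step_def by blast
  have "Y = rotation n m (int m) (tau_m n m Y)"
    using assms(2) by (simp add: tau_m_eq_rotation rotation_rotation rotation_0)
  then have "Y = {red n m (b + int m), red n m (a + int m)}"
    using tau_Y by auto
  then show "pivot_step n m X Y"
    unfolding pivot_step_def using X by (metis insert_commute)
qed

theorem proposition2p2:
  fixes m n :: nat
  assumes "1 \<le> m" and "2 \<le> n"
  shows "stable_translation_quiver (m_diagonals n m) (gamma_arr n m) (tau_m n m)"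
proof (rule stable_translation_quiverI)
  show "locally_finite_quiver (m_diagonals n m) (gamma_arr n m)"
    using finite_m_diagonals
    by (rule locally_finite_quiver_if_finite)
      (auto simp: gamma_arr_eq m_diagonals_def split: if_splits)
  show "bij_betw (tau_m n m) (m_diagonals n m) (m_diagonals n m)"
    by (rule bij_betw_tau_m)
  fix X Y
  assume "X \<in> m_diagonals n m" and "Y \<in> m_diagonals n m"
  then have "is_m_diagonal n m X" "is_m_diagonal n m Y" "is_m_diagonal n m (tau_m n m Y)"
    by (auto simp: m_diagonals_def tau_m_eq_rotation is_m_diagonal_rotation)
  then show "gamma_arr n m X Y = gamma_arr n m (tau_m n m Y) X"
    unfolding gamma_arr_eq using pivot_step_tau_m_iff m_diagonal_bounds by (metis subsetI)
qed

end
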